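(* Consider the system of three ODEs in the unknowns $(T_0(t),T_2(t),\eta(t))\in\mathbb R^3$: \[ R\dot T_0 = Q\bigl(s_0-\overline{\alpha}_0(\eta)\bigr)-A-BT_0,\qquad R\dot T_2 = Q\bigl(s_2-\overline{\alpha}_2(\eta)\bigr)-(B+6D)T_2,\qquad \dot\eta=\varepsilon\bigl(T_0+T_2\,p_2(\eta)-T_c\bigr), \] with parameter values $Q=343$, $A=202$, $B=1.9$, $\alpha_1=0.32$, $\alpha_2=0.62$, $T_c=-10$, $D=0.35$, any fixed $R>0$, and $\varepsilon>0$. Then, for all sufficiently small $\varepsilon>0$, this system has exactly two equilibrium solutions whose $\eta$-coordinate lies in $[0,1]$, say with $\eta$-coordinates $\eta_1<\eta_2$. The equilibrium with $\eta=\eta_1$ (the larger ice cap) is unstable, and the equilibrium with $\eta=\eta_2$ (the smaller ice cap) is asymptotically stable.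
   Context: $p_0(y)=1$ and $p_2(y)=\tfrac12(3y^2-1)$ are the Legendre polynomials of degree 0 and 2. The insolation distribution is $s(y)=s_0p_0(y)+s_2p_2(y)$ with $s_0=1$, $s_2=-0.477$. Set $q_0(y)=s(y)p_0(y)$, $q_2(y)=s(y)p_2(y)$. For $n=0,1$, define the polynomials in $\eta$ \[ \overline{\alpha}_{2n}(\eta)=\alpha_2 s_{2n}-(4n+1)(\alpha_2-\alpha_1)\int_0^\eta q_{2n}(y)\,dy . \] (These arise from the albedo $\alpha(y,\eta)=\alpha_1$ for $y<\eta$, $\alpha_2$ for $y>\eta$, with $\overline{\alpha}_{2n}(\eta)=(4n+1)\int_0^1\alpha(y,\eta)q_{2n}(y)\,dy$.) The variable $\eta$ (the ice line, $y=\sin(\text{latitude})$) is interpreted so that smaller $\eta$ means a larger ice cap. *)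

theory Defs
  imports "HOL-Analysis.Analysis"
begin

definition p0 :: "real \<Rightarrow> real" where "p0 y = 1"
definition p2 :: "real \<Rightarrow> real" where "p2 y = (3 * y^2 - 1) / 2"

definition s0 :: real where "s0 = 1"
definition s2 :: real where "s2 = -0.477"
definition sfun :: "real \<Rightarrow> real" where "sfun y = s0 * p0 y + s2 * p2 y"

definition q0 :: "real \<Rightarrow> real" where "q0 y = sfun y * p0 y"
definition q2 :: "real \<Rightarrow> real" where "q2 y = sfun y * p2 y"

definition Qc :: real where "Qc = 343"
definition Ac :: real where "Ac = 202"
definition Bc :: real where "Bc = 1.9"
definition alpha1 :: real where "alpha1 = 0.32"
definition alpha2 :: real where "alpha2 = 0.62"
definition Tc :: real where "Tc = -10"
definition Dc :: real where "Dc = 0.35"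

text \<open>Oriented integral from 0 to eta (correct also for eta < 0).\<close>
definition int0 :: "(real \<Rightarrow> real) \<Rightarrow> real \<Rightarrow> real" where
  "int0 q eta = integral {0..eta} q - integral {eta..0} q"

definition alphabar0 :: "real \<Rightarrow> real" where
  "alphabar0 eta = alpha2 * s0 - (alpha2 - alpha1) * int0 q0 eta"
definition alphabar2 :: "real \<Rightarrow> real" where
  "alphabar2 eta = alpha2 * s2 - 5 * (alpha2 - alpha1) * int0 q2 eta"

definition F :: "real \<Rightarrow> real \<Rightarrow> real \<times> real \<times> real \<Rightarrow> real \<times> real \<times> real" where
  "F R eps x = (case x of (T0, T2, eta) \<Rightarrow>
     ((Qc * (s0 - alphabar0 eta) - Ac - Bc * T0) / R,
      (Qc * (s2 - alphabar2 eta) - (Bc + 6 * Dc) * T2) / R,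
      eps * (T0 + T2 * p2 eta - Tc)))"

definition is_solution_on ::
  "(('a::real_normed_vector) \<Rightarrow> 'a) \<Rightarrow> (real \<Rightarrow> 'a) \<Rightarrow> real set \<Rightarrow> bool" where
  "is_solution_on f x I \<longleftrightarrow>
     (\<forall>t\<in>I. (x has_vector_derivative f (x t)) (at t within I))"

definition equilibrium :: "('a::real_normed_vector \<Rightarrow> 'a) \<Rightarrow> 'a \<Rightarrow> bool" where
  "equilibrium f p \<longleftrightarrow> f p = 0"

definition lyap_stable :: "('a::real_normed_vector \<Rightarrow> 'a) \<Rightarrow> 'a \<Rightarrow> bool" where
  "lyap_stable f p \<longleftrightarrow>
     (\<forall>e>0. \<exists>d>0. \<forall>x b. 0 < b \<longrightarrow> is_solution_on f x {0..<b} \<longrightarrow> dist (x 0) p < d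
        \<longrightarrow> (\<forall>t\<in>{0..<b}. dist (x t) p < e))"

definition unstable :: "('a::real_normed_vector \<Rightarrow> 'a) \<Rightarrow> 'a \<Rightarrow> bool" where
  "unstable f p \<longleftrightarrow> \<not> lyap_stable f p"

definition asymp_stable :: "('a::real_normed_vector \<Rightarrow> 'a) \<Rightarrow> 'a \<Rightarrow> bool" where
  "asymp_stable f p \<longleftrightarrow> lyap_stable f p \<and>
     (\<exists>d>0. \<forall>x. is_solution_on f x {0..} \<longrightarrow> dist (x 0) p < d \<longrightarrow> (x \<longlongrightarrow> p) at_top)"

end

theory Submission
  imports Defs
begin

text \<open>On the slow manifold \<open>T0 = T0_star eta\<close>, \<open>T2 = T2_star eta\<close> the ice line obeys
  \<open>eta' = eps * h_star eta\<close> for an explicit polynomial \<open>h_star\<close> of degree 7, and the equilibria are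
  the points of the slow manifold above the zeros of \<open>h_star\<close>. Certified interval bounds show that
  \<open>h_star\<close> has exactly two zeros in \<open>[0, 1]\<close>, crossing upwards at the first and downwards at the
  second. In the deviations \<open>u = T0 - T0_star eta\<close>, \<open>v = T2 - T2_star eta\<close>, \<open>z = eta - e\<close> the fast
  variables relax at rates \<open>1.9/R\<close> and \<open>4/R\<close>, so for \<open>eps R\<close> small \<open>z^2 + u^2 + v^2\<close> decays
  exponentially near the second equilibrium, while \<open>z^2 - u^2 - v^2\<close> grows exponentially near the
  first (Chetaev's instability argument, with solutions obtained by Picard iteration for the vector
  field truncated to a box).\<close>


lemma exp_weighted_integral_le:
  fixes f :: "real \<Rightarrow> 'a::banach"
  assumes L: "L > 0" and \<tau>: "0 \<le> \<tau>" and int: "f integrable_on {0..\<tau>}"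
    and bound: "\<And>s. s \<in> {0..\<tau>} \<Longrightarrow> norm (f s) \<le> L * exp (2 * L * s) * D"
  shows "exp (- (2 * L * \<tau>)) * norm (integral {0..\<tau>} f) \<le> D / 2"
proof -
  have D: "0 \<le> D"
  proof -
    have "norm (f 0) \<le> L * D" using bound[of 0] \<tau> by simp
    then have "0 \<le> L * D" using norm_ge_zero[of "f 0"] by linarith
    then show ?thesis using L by (simp add: zero_le_mult_iff)
  qed
  define G where "G s = D * exp (2 * L * s) / 2" for s
  have G: "((\<lambda>s. L * exp (2 * L * s) * D) has_integral G \<tau> - G 0) {0..\<tau>}"
    unfolding G_def by (rule fundamental_theorem_of_calculus[OF \<tau>])
      (auto intro!: derivative_eq_intros simp: has_real_derivative_iff_has_vector_derivative[symmetric])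
  have "norm (integral {0..\<tau>} f) \<le> integral {0..\<tau>} (\<lambda>s. L * exp (2 * L * s) * D)"
    using integral_norm_bound_integral[OF int _ bound] G by blast
  then have "norm (integral {0..\<tau>} f) \<le> G \<tau> - G 0"
    unfolding integral_unique[OF G] .
  then have "exp (- (2 * L * \<tau>)) * norm (integral {0..\<tau>} f) \<le> exp (- (2 * L * \<tau>)) * (G \<tau> - G 0)"
    by (intro mult_left_mono) auto
  also have "\<dots> \<le> D / 2"
    using D by (simp add: G_def algebra_simps exp_minus field_simps)
  finally show ?thesis .
qed

lemma bcontfun_of_range_on_interval:
  fixes f :: "real \<Rightarrow> 'a::metric_space"
  assumes "continuous_on UNIV f" and "\<And>t. f t \<in> f ` {a..b}"
  shows "f \<in> bcontfun"
proof -
  have "compact (f ` {a..b})"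
    by (rule compact_continuous_image[OF continuous_on_subset[OF assms(1)]]) auto
  then have "bounded (range f)" using assms(2) by (meson bounded_subset compact_imp_bounded image_subsetI)
  then show ?thesis using assms(1) by (simp add: bcontfun_def)
qed

lemma lipschitz_ode_solution_exists:
  fixes G :: "'a::banach \<Rightarrow> 'a"
  assumes L: "L > 0" and lip: "\<And>x y. norm (G x - G y) \<le> L * norm (x - y)" and T: "T > 0"
  shows "\<exists>x. x 0 = x0 \<and> (\<forall>t\<in>{0..T}. (x has_vector_derivative G (x t)) (at t within {0..T}))"
proof -
  define c where "c t = max 0 (min T t)" for t :: real
  have c_in: "c t \<in> {0..T}" for t using T by (auto simp: c_def)
  have c_id: "t \<in> {0..T} \<Longrightarrow> c t = t" for t by (auto simp: c_def)
  have c_cont: "continuous_on UNIV c" unfolding c_def by (intro continuous_intros)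
  have G_cont: "continuous_on UNIV G"
    by (rule lipschitz_on_continuous_on[of L]) (use L lip in \<open>auto intro: lipschitz_onI simp: dist_norm\<close>)
  text \<open>Bielecki's trick: the Picard operator is a contraction for the weighted sup-norm
    \<open>sup (exp (-2 L t) * norm (x t))\<close>; we substitute \<open>x t = exp (2 L t) * y t\<close> with \<open>y\<close> bounded and
    continuous, extended constantly outside \<open>[0, T]\<close>.\<close>
  define E where "E y s = exp (2 * L * c s) *\<^sub>R apply_bcontfun y s" for y :: "real \<Rightarrow>\<^sub>C 'a" and s
  have E_cont: "continuous_on UNIV (E y)" for y
    unfolding E_def by (intro continuous_intros continuous_on_compose2[OF _ c_cont]) auto
  have GE_cont: "continuous_on A (\<lambda>s. G (E y s))" for y A
    by (rule continuous_on_subset[OF continuous_on_compose2[OF G_cont E_cont]]) auto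
  have GE_int: "(\<lambda>s. G (E y s)) integrable_on {0..u}" for y u
    by (rule integrable_continuous_interval[OF GE_cont])
  define Pf where "Pf y t = exp (- (2 * L * c t)) *\<^sub>R (x0 + integral {0..c t} (\<lambda>s. G (E y s)))" for y t
  have Pf_bcontfun: "Pf y \<in> bcontfun" for y
  proof (rule bcontfun_of_range_on_interval)
    have "continuous_on {0..T} (\<lambda>u. integral {0..u} (\<lambda>s. G (E y s)))"
      by (rule indefinite_integral_continuous_1[OF GE_int])
    from continuous_on_compose2[OF this c_cont]
    have int_cont: "continuous_on UNIV (\<lambda>t. integral {0..c t} (\<lambda>s. G (E y s)))" using c_in by blast
    show "continuous_on UNIV (Pf y)"
      unfolding Pf_def by (intro continuous_intros int_cont continuous_on_compose2[OF _ c_cont]) auto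
    show "Pf y t \<in> Pf y ` {0..T}" for t
      using c_id c_in by (metis Pf_def image_eqI)
  qed
  define P where "P y = Bcontfun (Pf y)" for y
  have P_apply: "apply_bcontfun (P y) t = Pf y t" for y t
    unfolding P_def using Pf_bcontfun by (simp add: Bcontfun_inverse)
  have "dist (P y) (P z) \<le> 1/2 * dist y z" for y z
  proof (rule dist_bound)
    fix t
    define \<tau> where "\<tau> = c t"
    have \<tau>: "0 \<le> \<tau>" using c_in by (auto simp: \<tau>_def)
    have "exp (- (2 * L * \<tau>)) * norm (integral {0..\<tau>} (\<lambda>s. G (E y s) - G (E z s))) \<le> dist y z / 2"
    proof (rule exp_weighted_integral_le[OF L \<tau>])
      show "(\<lambda>s. G (E y s) - G (E z s)) integrable_on {0..\<tau>}" by (intro integrable_diff GE_int)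
      fix s assume s: "s \<in> {0..\<tau>}"
      then have "c s = s" using c_in[of t] by (intro c_id) (auto simp: \<tau>_def)
      then have "norm (E y s - E z s) = exp (2 * L * s) * dist (apply_bcontfun y s) (apply_bcontfun z s)"
        by (simp add: E_def dist_norm scaleR_diff_right[symmetric])
      also have "\<dots> \<le> exp (2 * L * s) * dist y z" by (intro mult_left_mono dist_bounded) auto
      finally show "norm (G (E y s) - G (E z s)) \<le> L * exp (2 * L * s) * dist y z"
        using lip[of "E y s" "E z s"] L by (smt (verit, best) mult.assoc mult_left_mono)
    qed
    then show "dist (apply_bcontfun (P y) t) (apply_bcontfun (P z) t) \<le> 1/2 * dist y z"
      by (simp add: P_apply Pf_def \<tau>_def dist_norm scaleR_diff_right[symmetric] integral_diff GE_int)
  qed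
  then obtain y where fixpoint: "P y = y" using banach_fix_type[of "1/2" P] by auto
  define x where "x t = x0 + integral {0..t} (\<lambda>s. G (E y s))" for t
  have x_E: "x t = E y t" if "t \<in> {0..T}" for t
    using fixpoint that c_id by (metis E_def P_apply Pf_def exp_minus_inverse scaleR_scaleR scaleR_one x_def)
  show ?thesis
  proof (intro exI conjI ballI)
    show "x 0 = x0" by (simp add: x_def)
    fix t assume t: "t \<in> {0..T}"
    have "((\<lambda>u. integral {0..u} (\<lambda>s. G (E y s))) has_vector_derivative G (E y t)) (at t within {0..T})"
      by (rule integral_has_vector_derivative[OF GE_cont t])
    then have "(x has_vector_derivative G (E y t)) (at t within {0..T})"
      unfolding x_def by (intro derivative_eq_intros) auto
    then show "(x has_vector_derivative G (x t)) (at t within {0..T})" using x_E[OF t] by simp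
  qed
qed

lemma exp_decay_of_deriv_le:
  fixes g g' :: "real \<Rightarrow> real"
  assumes t: "0 \<le> t"
    and deriv: "\<And>s. s \<in> {0..t} \<Longrightarrow> (g has_real_derivative g' s) (at s within {0..t})"
    and le: "\<And>s. 0 < s \<Longrightarrow> s < t \<Longrightarrow> g' s \<le> - k * g s"
  shows "g t \<le> g 0 * exp (- k * t)"
proof -
  define h where "h s = g s * exp (k * s)" for s
  have "continuous_on {0..t} h"
    unfolding h_def by (intro continuous_intros DERIV_continuous_on[OF deriv])
  then have "h t \<le> h 0"
  proof (intro DERIV_nonpos_imp_decreasing_open[OF t])
    fix s assume s: "0 < s" "s < t"
    have "(g has_real_derivative g' s) (at s)"
      using deriv[of s] s at_within_Icc_at[of 0 s t] by auto
    then have "(h has_real_derivative (g' s + k * g s) * exp (k * s)) (at s)"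
      unfolding h_def by (auto intro!: derivative_eq_intros simp: algebra_simps)
    moreover have "(g' s + k * g s) * exp (k * s) \<le> 0"
      using le[OF s] by (intro mult_nonpos_nonneg) auto
    ultimately show "\<exists>y. (h has_real_derivative y) (at s) \<and> y \<le> 0" by blast
  qed
  then have "g t * exp (k * t) * exp (- k * t) \<le> g 0 * exp (- k * t)"
    by (intro mult_right_mono) (auto simp: h_def)
  then show ?thesis by (simp add: mult.assoc exp_add[symmetric])
qed

lemma exp_growth_of_deriv_ge:
  fixes g g' :: "real \<Rightarrow> real"
  assumes t: "0 \<le> t"
    and deriv: "\<And>s. s \<in> {0..t} \<Longrightarrow> (g has_real_derivative g' s) (at s within {0..t})"
    and ge: "\<And>s. 0 < s \<Longrightarrow> s < t \<Longrightarrow> k * g s \<le> g' s"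
  shows "g 0 * exp (k * t) \<le> g t"
proof -
  have "- g t \<le> - g 0 * exp (- (- k) * t)"
    by (rule exp_decay_of_deriv_le[OF t, of "\<lambda>s. - g s" "\<lambda>s. - g' s"])
      (use deriv ge in \<open>auto intro!: derivative_eq_intros\<close>)
  then show ?thesis by simp
qed

lemma first_exit_time:
  fixes g :: "real \<Rightarrow> real"
  assumes cont: "continuous_on {0..t} g" and g0: "g 0 < c" and exit: "s \<in> {0..t}" "c \<le> g s"
  obtains s1 where "0 < s1" "s1 \<le> t" "c \<le> g s1" "\<And>s. 0 \<le> s \<Longrightarrow> s < s1 \<Longrightarrow> g s < c"
proof -
  define B where "B = {0..t} \<inter> g -` {c..}"
  have "B \<noteq> {}" using exit by (auto simp: B_def)
  moreover have bdd: "bdd_below B" by (auto simp: B_def bdd_below_def)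
  moreover have "closed B" unfolding B_def by (rule continuous_closed_preimage[OF cont]) auto
  ultimately have inf_B: "Inf B \<in> B" by (rule closed_contains_Inf)
  have "g s < c" if "0 \<le> s" "s < Inf B" for s
    using cInf_lower[OF _ bdd, of s] that inf_B by (force simp: B_def)
  moreover have "Inf B \<noteq> 0" using inf_B g0 by (auto simp: B_def)
  ultimately show ?thesis using that[of "Inf B"] inf_B by (auto simp: B_def)
qed

lemma stable_local_solution_stays_near:
  fixes f :: "'a::real_normed_vector \<Rightarrow> 'a"
  assumes stable: "\<And>x b. 0 < b \<Longrightarrow> is_solution_on f x {0..<b} \<Longrightarrow> dist (x 0) p < d
      \<Longrightarrow> \<forall>t\<in>{0..<b}. dist (x t) p < r"
    and r: "r < \<rho>" and cont: "continuous_on {0..T} X" and X0: "dist (X 0) p < d" "dist (X 0) p < \<rho>"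
    and deriv: "\<And>t. t \<in> {0..T} \<Longrightarrow> dist (X t) p < \<rho> \<Longrightarrow>
       (X has_vector_derivative f (X t)) (at t within {0..T})"
    and t: "t \<in> {0..T}"
  shows "dist (X t) p < \<rho>"
proof (rule ccontr)
  define g where "g t = dist (X t) p" for t
  have g_cont: "continuous_on {0..T} g" unfolding g_def by (intro continuous_intros cont)
  assume "\<not> dist (X t) p < \<rho>"
  then have "\<rho> \<le> g t" by (simp add: g_def)
  moreover have "g 0 < \<rho>" using X0 by (simp add: g_def)
  ultimately obtain s1 where s1: "0 < s1" "s1 \<le> T" "\<rho> \<le> g s1"
    and before: "\<And>s. 0 \<le> s \<Longrightarrow> s < s1 \<Longrightarrow> g s < \<rho>"
    using first_exit_time[OF g_cont _ t] by blast
  text \<open>Up to the exit time \<open>X\<close> solves the ODE, so stability keeps it within \<open>r\<close> of \<open>p\<close>.\<close>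
  have "is_solution_on f X {0..<s1}"
    unfolding is_solution_on_def
  proof
    fix t assume t: "t \<in> {0..<s1}"
    then have "(X has_vector_derivative f (X t)) (at t within {0..T})"
      using deriv[of t] before[of t] s1 by (simp add: g_def)
    then show "(X has_vector_derivative f (X t)) (at t within {0..<s1})"
      by (rule has_vector_derivative_within_subset) (use s1 in auto)
  qed
  from stable[OF s1(1) this X0(1)] have "\<forall>t\<in>{0..<s1}. g t \<le> r" by (simp add: g_def less_imp_le)
  moreover have "closure {0..<s1} = {0..s1}" using s1 by simp
  moreover have "continuous_on {0..s1} g" using continuous_on_subset[OF g_cont] s1 by auto
  ultimately have "g s1 \<le> r" using continuous_le_on_closure[of "{0..<s1}" g s1 r] s1 by auto
  then show False using s1 r by simp
qed

lemma mean_value_in_interval: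
  fixes f f' :: "real \<Rightarrow> real"
  assumes deriv: "\<And>x. x \<in> {lo..hi} \<Longrightarrow> (f has_real_derivative f' x) (at x)"
    and a: "a \<in> {lo..hi}" and b: "b \<in> {lo..hi}"
  shows "\<exists>\<xi>\<in>{lo..hi}. f a - f b = (a - b) * f' \<xi>"
proof -
  have mvt: "\<exists>\<xi>\<in>{lo..hi}. f y - f x = (y - x) * f' \<xi>"
    if xy: "x < y" "x \<in> {lo..hi}" "y \<in> {lo..hi}" for x y
  proof -
    have "\<exists>\<xi>>x. \<xi> < y \<and> f y - f x = (y - x) * f' \<xi>"
      by (rule MVT2) (use xy deriv in auto)
    then show ?thesis using xy by force
  qed
  consider "a < b" | "a = b" | "b < a" by linarith
  then show ?thesis
  proof cases
    case 1
    then obtain \<xi> where "\<xi> \<in> {lo..hi}" "f b - f a = (b - a) * f' \<xi>" using mvt a b by blast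
    then show ?thesis by (intro bexI[of _ \<xi>]) (auto simp: algebra_simps)
  qed (use a mvt b in auto)
qed

lemma zero_crossing_bounds:
  fixes f f' :: "real \<Rightarrow> real"
  assumes deriv: "\<And>x. x \<in> {lo..hi} \<Longrightarrow> (f has_real_derivative f' x) (at x)"
    and bounds: "\<And>x. x \<in> {lo..hi} \<Longrightarrow> m \<le> f' x \<and> f' x \<le> M" and m: "0 \<le> m"
    and zero: "f e = 0" and e: "e \<in> {lo..hi}" and x: "x \<in> {lo..hi}"
  shows "m * (x - e)^2 \<le> (x - e) * f x \<and> \<bar>f x\<bar> \<le> M * \<bar>x - e\<bar>"
proof -
  obtain \<xi> where \<xi>: "\<xi> \<in> {lo..hi}" "f x = f' \<xi> * (x - e)"
    using mean_value_in_interval[OF deriv x e] zero by (auto simp: mult.commute)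
  have "m * (x - e)^2 \<le> f' \<xi> * (x - e)^2"
    using bounds[OF \<xi>(1)] by (intro mult_right_mono) auto
  moreover have "\<bar>f' \<xi>\<bar> * \<bar>x - e\<bar> \<le> M * \<bar>x - e\<bar>"
    using bounds[OF \<xi>(1)] m by (intro mult_right_mono) auto
  moreover have "(x - e) * f x = f' \<xi> * (x - e)^2" "\<bar>f x\<bar> = \<bar>f' \<xi>\<bar> * \<bar>x - e\<bar>"
    using \<xi>(2) by (simp_all add: power2_eq_square abs_mult)
  ultimately show ?thesis by simp
qed

lemma cross_terms_le:
  fixes z u v p H a0 a2 S M :: real
  assumes p: "\<bar>p\<bar> \<le> 1" and H: "\<bar>H\<bar> \<le> M * \<bar>z\<bar>" and a: "\<bar>a0\<bar> \<le> S" "\<bar>a2\<bar> \<le> S"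
  shows "z * (u + v * p) - (u + v * p + H) * (a0 * u + a2 * v)
    \<le> (1 + S * M) * \<bar>z\<bar> * (\<bar>u\<bar> + \<bar>v\<bar>) + S * (\<bar>u\<bar> + \<bar>v\<bar>)^2"
proof -
  define r where "r = \<bar>u\<bar> + \<bar>v\<bar>"
  have uvp: "\<bar>u + v * p\<bar> \<le> r"
    using abs_triangle_ineq[of u "v * p"] mult_left_le[OF p, of "\<bar>v\<bar>"] by (simp add: r_def abs_mult)
  have aS: "\<bar>a0 * u + a2 * v\<bar> \<le> S * r"
    using abs_triangle_ineq[of "a0 * u" "a2 * v"] mult_right_mono[OF a(1), of "\<bar>u\<bar>"]
      mult_right_mono[OF a(2), of "\<bar>v\<bar>"] by (simp add: r_def abs_mult algebra_simps)
  have wb: "\<bar>u + v * p + H\<bar> \<le> r + M * \<bar>z\<bar>"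
    using abs_triangle_ineq[of "u + v * p" H] uvp H by linarith
  have "\<bar>(u + v * p + H) * (a0 * u + a2 * v)\<bar> \<le> (r + M * \<bar>z\<bar>) * (S * r)"
    unfolding abs_mult by (rule mult_mono[OF wb aS]) (auto intro: order_trans[OF abs_ge_zero wb])
  moreover have "\<bar>z * (u + v * p)\<bar> \<le> \<bar>z\<bar> * r"
    unfolding abs_mult using uvp by (rule mult_left_mono) simp
  ultimately have "z * (u + v * p) - (u + v * p + H) * (a0 * u + a2 * v) \<le> \<bar>z\<bar> * r + (r + M * \<bar>z\<bar>) * (S * r)"
    by (smt (verit) abs_ge_self abs_minus_cancel)
  then show ?thesis by (simp add: r_def power2_eq_square algebra_simps)
qed

text \<open>The left-hand side is the shape of half the orbital derivative of \<open>z^2 + u^2 + v^2\<close>: once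
  \<open>\<epsilon>\<close> is small, the damping \<open>\<beta>, \<beta>'\<close> of \<open>u, v\<close> and the restoring term \<open>z * H\<close> dominate all cross terms.\<close>
lemma dissipation_estimate:
  fixes z u v p H a0 a2 \<beta> \<beta>' \<epsilon> c S M :: real
  assumes zH: "z * H \<le> - c * z^2" and H: "\<bar>H\<bar> \<le> M * \<bar>z\<bar>"
    and a: "\<bar>a0\<bar> \<le> S" "\<bar>a2\<bar> \<le> S" and p: "\<bar>p\<bar> \<le> 1"
    and c: "c > 0" and S: "S \<ge> 0" and \<beta>': "\<beta> \<le> \<beta>'" and \<epsilon>: "\<epsilon> > 0"
    and \<epsilon>K: "\<epsilon> * ((1 + S * M)^2 / (2 * c) + S) \<le> \<beta> / 4" and \<epsilon>c: "\<epsilon> * c \<le> \<beta>"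
  shows "\<epsilon> * z * (u + v * p + H) - \<beta> * u^2 - \<beta>' * v^2 - \<epsilon> * (u + v * p + H) * (a0 * u + a2 * v)
    \<le> - (\<epsilon> * c / 2) * (z^2 + u^2 + v^2)"
proof -
  define r where "r = \<bar>u\<bar> + \<bar>v\<bar>"
  define A where "A = 1 + S * M"
  define K where "K = A^2 / (2 * c) + S"
  have young: "A * \<bar>z\<bar> * r \<le> c / 2 * z^2 + A^2 / (2 * c) * r^2"
  proof -
    have "0 \<le> (c * \<bar>z\<bar> - A * r)^2" by simp
    then show ?thesis using c by (simp add: field_simps power2_eq_square)
  qed
  have r2: "r^2 \<le> 2 * (u^2 + v^2)"
    using zero_le_power2[of "\<bar>u\<bar> - \<bar>v\<bar>"] by (simp add: r_def power2_eq_square algebra_simps)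
  have "z * (u + v * p + H) - (u + v * p + H) * (a0 * u + a2 * v)
      = z * H + (z * (u + v * p) - (u + v * p + H) * (a0 * u + a2 * v))"
    by (simp add: algebra_simps)
  also have "\<dots> \<le> - c * z^2 + A * \<bar>z\<bar> * r + S * r^2"
    using cross_terms_le[OF p H a, of u v] zH unfolding A_def r_def by linarith
  also have "\<dots> \<le> - c / 2 * z^2 + K * r^2" using young by (simp add: K_def algebra_simps)
  also have "\<dots> \<le> - c / 2 * z^2 + K * (2 * (u^2 + v^2))"
    using r2 c S by (intro add_left_mono mult_left_mono) (auto simp: K_def)
  finally have "\<epsilon> * (z * (u + v * p + H) - (u + v * p + H) * (a0 * u + a2 * v))
      \<le> \<epsilon> * (- c / 2 * z^2) + 2 * (\<epsilon> * K) * (u^2 + v^2)"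
    using \<epsilon> by (auto dest: mult_left_mono[of _ _ \<epsilon>] simp: algebra_simps)
  moreover have "2 * (\<epsilon> * K) * (u^2 + v^2) \<le> \<beta> / 2 * (u^2 + v^2)"
    using \<epsilon>K by (intro mult_right_mono) (auto simp: K_def A_def)
  moreover have "\<epsilon> * c / 2 * (u^2 + v^2) \<le> \<beta> / 2 * (u^2 + v^2)"
    using \<epsilon>c by (intro mult_right_mono) auto
  moreover have "\<beta> * v^2 \<le> \<beta>' * v^2" using \<beta>' by (rule mult_right_mono) simp
  ultimately show ?thesis by (simp add: algebra_simps)
qed

lemma dist_triple_sq:
  fixes X Y :: "real \<times> real \<times> real"
  shows "(dist X Y)^2 = (fst X - fst Y)^2 + (fst (snd X) - fst (snd Y))^2 + (snd (snd X) - snd (snd Y))^2"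
  by (cases X; cases Y) (simp add: dist_Pair_Pair dist_real_def)

lemma sq_add_le: "(a + b)^2 \<le> 2 * a^2 + 2 * (b::real)^2"
  using zero_le_power2[of "a - b"] by (simp add: power2_eq_square algebra_simps)

lemma components_le_norm:
  fixes X :: "real \<times> real \<times> real"
  shows "\<bar>fst X\<bar> \<le> norm X" "\<bar>fst (snd X)\<bar> \<le> norm X" "\<bar>snd (snd X)\<bar> \<le> norm X"
proof -
  have "norm (fst X) \<le> norm X" "norm (snd X) \<le> norm X"
    by (metis norm_fst_le prod.collapse, metis norm_snd_le prod.collapse)
  moreover have "norm (fst (snd X)) \<le> norm (snd X)" "norm (snd (snd X)) \<le> norm (snd X)"
    by (metis norm_fst_le prod.collapse, metis norm_snd_le prod.collapse)
  ultimately show "\<bar>fst X\<bar> \<le> norm X" "\<bar>fst (snd X)\<bar> \<le> norm X" "\<bar>snd (snd X)\<bar> \<le> norm X"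
    by auto
qed

lemma norm_triple_le:
  fixes X :: "real \<times> real \<times> real"
  shows "norm X \<le> \<bar>fst X\<bar> + \<bar>fst (snd X)\<bar> + \<bar>snd (snd X)\<bar>"
  using norm_Pair_le[of "fst X" "snd X"] norm_Pair_le[of "fst (snd X)" "snd (snd X)"] by simp

section \<open>Certified positivity of polynomials\<close>

fun lower_bound_coeffs :: "'a::linordered_idom list \<Rightarrow> 'a \<Rightarrow> 'a" where
  "lower_bound_coeffs [] w = 0"
| "lower_bound_coeffs (c # cs) w = c + min 0 (w * lower_bound_coeffs cs w)"

lemma lower_bound_coeffs_le_poly:
  assumes "0 \<le> t" "t \<le> w"
  shows "lower_bound_coeffs (coeffs p) w \<le> poly p t"
proof (induction p)
  case (pCons c p)
  have "min 0 (w * lower_bound_coeffs (coeffs p) w) \<le> t * lower_bound_coeffs (coeffs p) w"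
    using assms by (cases "0 \<le> lower_bound_coeffs (coeffs p) w")
      (auto intro: min.coboundedI2 mult_right_mono_neg)
  also have "\<dots> \<le> t * poly p t" using pCons(2) assms(1) by (rule mult_left_mono)
  finally show ?case by (simp add: cCons_def)
qed simp

text \<open>On each piece \<open>[a, b]\<close> the Taylor expansion of \<open>p\<close> at \<open>a\<close> is bounded below termwise; this is
  sharp enough to certify positivity on short pieces by simplification.\<close>

fun pos_on_partition :: "'a::linordered_idom poly \<Rightarrow> 'a list \<Rightarrow> bool" where
  "pos_on_partition p (a # b # xs) \<longleftrightarrow>
     a \<le> b \<and> 0 < lower_bound_coeffs (coeffs (p \<circ>\<^sub>p [:a, 1:])) (b - a) \<and> pos_on_partition p (b # xs)"
| "pos_on_partition p _ \<longleftrightarrow> True"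

lemma poly_pos_of_partition:
  assumes "pos_on_partition p (a # b # xs)" "a \<le> x" "x \<le> last (b # xs)"
  shows "0 < poly p x"
  using assms
proof (induction xs arbitrary: a b)
  case Nil
  then show ?case
    using lower_bound_coeffs_le_poly[of "x - a" "b - a" "p \<circ>\<^sub>p [:a, 1:]"] by (simp add: poly_pcompose)
next
  case (Cons c xs)
  show ?case
  proof (cases "x \<le> b")
    case True
    then show ?thesis
      using lower_bound_coeffs_le_poly[of "x - a" "b - a" "p \<circ>\<^sub>p [:a, 1:]"] Cons.prems
      by (simp add: poly_pcompose)
  next
    case False
    then show ?thesis using Cons.IH[of b c] Cons.prems by auto
  qed
qed

section \<open>The albedo integrals and the slow manifold\<close>

lemma int0_eq_antiderivative:
  assumes deriv: "\<And>x. (G has_real_derivative q x) (at x)" and G0: "G 0 = 0"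
  shows "int0 q e = G e"
proof (cases "0 \<le> e")
  case True
  have "(q has_integral G e - G 0) {0..e}"
    by (rule fundamental_theorem_of_calculus[OF True])
      (auto simp: has_real_derivative_iff_has_vector_derivative[symmetric] intro: DERIV_subset[OF deriv])
  then show ?thesis using G0 True by (cases "e = 0") (auto simp: int0_def integral_unique)
next
  case False
  have "(q has_integral G 0 - G e) {e..0}"
    by (rule fundamental_theorem_of_calculus)
      (use False in \<open>auto simp: has_real_derivative_iff_has_vector_derivative[symmetric] intro: DERIV_subset[OF deriv]\<close>)
  then show ?thesis using G0 False by (auto simp: int0_def integral_unique)
qed

lemma q0_eq: "q0 x = 1 - 0.477 * (3 * x^2 - 1) / 2"
  by (simp add: q0_def sfun_def p0_def p2_def s0_def s2_def)

lemma q2_eq: "q2 x = (3 * x^2 - 1) / 2 - 0.477 * (9 * x^4 - 6 * x^2 + 1) / 4"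
  by (simp add: q2_def sfun_def p0_def p2_def s0_def s2_def field_simps)

lemma int0_q0: "int0 q0 e = e - 0.477 * (e^3 - e) / 2"
proof (rule int0_eq_antiderivative)
  show "((\<lambda>x. x - 0.477 * (x^3 - x) / 2) has_real_derivative q0 x) (at x)" for x
    by (auto intro!: derivative_eq_intros simp: q0_eq)
qed simp

lemma int0_q2: "int0 q2 e = (e^3 - e) / 2 - 0.477 * (9 * e^5 / 5 - 2 * e^3 + e) / 4"
proof (rule int0_eq_antiderivative)
  show "((\<lambda>x. (x^3 - x) / 2 - 0.477 * (9 * x^5 / 5 - 2 * x^3 + x) / 4) has_real_derivative q2 x) (at x)" for x
    by (auto intro!: derivative_eq_intros simp: q2_eq field_simps)
qed simp

lemma int0_q0_deriv: "(int0 q0 has_real_derivative q0 x) (at x)"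
  unfolding int0_q0[abs_def] by (auto intro!: derivative_eq_intros simp: q0_eq)

lemma int0_q2_deriv: "(int0 q2 has_real_derivative q2 x) (at x)"
  unfolding int0_q2[abs_def] by (auto intro!: derivative_eq_intros simp: q2_eq field_simps)

lemma q0_bound:
  assumes "x \<in> {0..1}"
  shows "\<bar>q0 x\<bar> \<le> 2"
proof -
  define y where "y = x^2"
  have "0 \<le> y" "y \<le> 1" using assms by (simp_all add: y_def power_le_one)
  then show ?thesis unfolding q0_eq y_def[symmetric] by (auto simp: abs_le_iff)
qed

lemma q2_bound:
  assumes "x \<in> {0..1}"
  shows "\<bar>q2 x\<bar> \<le> 3"
proof -
  define y z where "y = x^2" and "z = x^4"
  have "0 \<le> y" "y \<le> 1" "0 \<le> z" "z \<le> 1" using assms by (simp_all add: y_def z_def power_le_one)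
  then show ?thesis unfolding q2_eq y_def[symmetric] z_def[symmetric] by (simp add: abs_le_iff field_simps)
qed

lemma p2_bound:
  assumes "x \<in> {0..1}"
  shows "\<bar>p2 x\<bar> \<le> 1"
proof -
  define y where "y = x^2"
  have "0 \<le> y" "y \<le> 1" using assms by (simp_all add: y_def power_le_one)
  then show ?thesis unfolding p2_def y_def[symmetric] by (auto simp: abs_le_iff)
qed

lemma p2_lipschitz:
  assumes "a \<in> {0..1}" "b \<in> {0..1}"
  shows "\<bar>p2 a - p2 b\<bar> \<le> 3 * \<bar>a - b\<bar>"
proof -
  have "(p2 has_real_derivative 3 * x) (at x within {0..1})" for x
    unfolding p2_def[abs_def] by (auto intro!: derivative_eq_intros)
  then show ?thesis
    using field_differentiable_bound[of "{0..1}" p2 "\<lambda>x. 3 * x" 3 a b] assms by auto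
qed

text \<open>The nullclines of the two fast equations; on them the ice line moves with speed
  \<open>eps * h_star eta\<close>.\<close>

definition T0_star :: "real \<Rightarrow> real" where
  "T0_star eta = (Qc * (s0 - alphabar0 eta) - Ac) / Bc"

definition T2_star :: "real \<Rightarrow> real" where
  "T2_star eta = Qc * (s2 - alphabar2 eta) / (Bc + 6 * Dc)"

definition h_star :: "real \<Rightarrow> real" where
  "h_star eta = T0_star eta + T2_star eta * p2 eta - Tc"

lemma T0_star_deriv: "(T0_star has_real_derivative 1029 / 19 * q0 x) (at x)"
  unfolding T0_star_def[abs_def] alphabar0_def
  by (auto intro!: derivative_eq_intros int0_q0_deriv simp: Qc_def Bc_def alpha1_def alpha2_def)

lemma T2_star_deriv: "(T2_star has_real_derivative 1029 / 8 * q2 x) (at x)"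
  unfolding T2_star_def[abs_def] alphabar2_def
  by (auto intro!: derivative_eq_intros int0_q2_deriv simp: Qc_def Bc_def Dc_def alpha1_def alpha2_def)

lemma T0_star_lipschitz:
  assumes "a \<in> {0..1}" "b \<in> {0..1}"
  shows "\<bar>T0_star a - T0_star b\<bar> \<le> 600 * \<bar>a - b\<bar>"
  using assms field_differentiable_bound[of "{0..1}" T0_star "\<lambda>x. 1029 / 19 * q0 x" 600 a b]
    T0_star_deriv q0_bound by (force intro: DERIV_subset simp: abs_mult)

lemma T2_star_lipschitz:
  assumes "a \<in> {0..1}" "b \<in> {0..1}"
  shows "\<bar>T2_star a - T2_star b\<bar> \<le> 600 * \<bar>a - b\<bar>"
  using assms field_differentiable_bound[of "{0..1}" T2_star "\<lambda>x. 1029 / 8 * q2 x" 600 a b]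
    T2_star_deriv q2_bound by (force intro: DERIV_subset simp: abs_mult)

lemma T2_star_bound:
  assumes "x \<in> {0..1}"
  shows "\<bar>T2_star x\<bar> \<le> 700"
proof -
  have "T2_star 0 = 343 * (-0.477 - 0.62 * (-0.477)) / 4"
    by (simp add: T2_star_def alphabar2_def int0_q2 Qc_def Bc_def Dc_def alpha2_def s2_def)
  then show ?thesis using T2_star_lipschitz[OF assms, of 0] assms by (auto simp: abs_le_iff)
qed

definition h_star_poly :: "real poly" where
  "h_star_poly = [:-151576429/7600000, 129990483/1216000, -9325827/400000, -218743791/1216000,
     0, 50012487/320000, 0, -13252491/320000:]"

lemma h_star_eq_poly: "h_star x = poly h_star_poly x"
  by (simp add: h_star_def T0_star_def T2_star_def alphabar0_def alphabar2_def int0_q0 int0_q2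
      h_star_poly_def p2_def Qc_def Ac_def Bc_def Dc_def Tc_def alpha1_def alpha2_def s0_def s2_def
      field_simps) (simp add: algebra_simps eval_nat_numeral)

lemma h_star_deriv: "(h_star has_real_derivative poly (pderiv h_star_poly) x) (at x)"
  unfolding h_star_eq_poly[abs_def] by (rule poly_DERIV)

lemma h_star_neg_near_0: "x \<in> {0..3/20} \<Longrightarrow> h_star x < 0"
proof -
  have "pos_on_partition (- h_star_poly) [0, 3/20]"
    by (simp add: h_star_poly_def pcompose_pCons mult_pCons_left)
  then show "x \<in> {0..3/20} \<Longrightarrow> h_star x < 0"
    using poly_pos_of_partition[of "- h_star_poly" 0 "3/20" "[]" x] by (simp add: h_star_eq_poly)
qed

lemma h_star_pos: "x \<in> {3/10..3/4} \<Longrightarrow> 0 < h_star x"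
proof -
  have "pos_on_partition h_star_poly [3/10, 21/40, 3/4]"
    by (simp add: h_star_poly_def pcompose_pCons mult_pCons_left)
  then show "x \<in> {3/10..3/4} \<Longrightarrow> 0 < h_star x"
    using poly_pos_of_partition[of h_star_poly "3/10" "21/40" "[3/4]" x] by (simp add: h_star_eq_poly)
qed

lemma h_star_neg_near_1: "x \<in> {9/10..1} \<Longrightarrow> h_star x < 0"
proof -
  have "pos_on_partition (- h_star_poly) [9/10, 1]"
    by (simp add: h_star_poly_def pcompose_pCons mult_pCons_left)
  then show "x \<in> {9/10..1} \<Longrightarrow> h_star x < 0"
    using poly_pos_of_partition[of "- h_star_poly" "9/10" 1 "[]" x] by (simp add: h_star_eq_poly)
qed

lemma h_star_deriv_bounds_low:
  assumes "x \<in> {3/20..3/10}"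
  shows "10 \<le> poly (pderiv h_star_poly) x \<and> poly (pderiv h_star_poly) x \<le> 100"
proof -
  have "pos_on_partition (pderiv h_star_poly - [:10:]) [3/20, 3/10]"
    "pos_on_partition ([:100:] - pderiv h_star_poly) [3/20, 3/10]"
    by (simp_all add: h_star_poly_def pcompose_pCons pderiv_pCons mult_pCons_left)
  then show ?thesis
    using poly_pos_of_partition[of _ "3/20" "3/10" "[]" x] assms by fastforce
qed

lemma h_star_deriv_bounds_high:
  assumes "x \<in> {3/4..9/10}"
  shows "10 \<le> - poly (pderiv h_star_poly) x \<and> - poly (pderiv h_star_poly) x \<le> 100"
proof -
  have "pos_on_partition (- pderiv h_star_poly - [:10:]) [3/4, 9/10]"
    "pos_on_partition ([:100:] + pderiv h_star_poly) [3/4, 9/10]"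
    by (simp_all add: h_star_poly_def pcompose_pCons pderiv_pCons mult_pCons_left)
  then show ?thesis
    using poly_pos_of_partition[of _ "3/4" "9/10" "[]" x] assms by fastforce
qed

lemma h_star_zero_low: "\<exists>e\<in>{1/5..1/4}. h_star e = 0"
proof -
  have "h_star (1/5) < 0" "0 < h_star (1/4)" by (simp_all add: h_star_eq_poly h_star_poly_def)
  moreover have "continuous_on {1/5..1/4} h_star"
    using h_star_deriv by (meson DERIV_isCont continuous_at_imp_continuous_on)
  ultimately show ?thesis using IVT'[of h_star "1/5" 0 "1/4"] by auto
qed

lemma h_star_zero_high: "\<exists>e\<in>{4/5..17/20}. h_star e = 0"
proof -
  have "0 < h_star (4/5)" "h_star (17/20) < 0" by (simp_all add: h_star_eq_poly h_star_poly_def)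
  moreover have "continuous_on {4/5..17/20} h_star"
    using h_star_deriv by (meson DERIV_isCont continuous_at_imp_continuous_on)
  ultimately show ?thesis using IVT2'[of h_star "17/20" 0 "4/5"] by auto
qed

lemma h_star_transversal_low:
  assumes "e \<in> {3/20..3/10}" "h_star e = 0" "x \<in> {3/20..3/10}"
  shows "10 * (x - e)^2 \<le> (x - e) * h_star x \<and> \<bar>h_star x\<bar> \<le> 100 * \<bar>x - e\<bar>"
  using zero_crossing_bounds[OF h_star_deriv h_star_deriv_bounds_low _ _ assms(1) assms(3)] assms(2)
  by simp

lemma h_star_transversal_high:
  assumes "e \<in> {3/4..9/10}" "h_star e = 0" "x \<in> {3/4..9/10}"
  shows "10 * (x - e)^2 \<le> (x - e) * - h_star x \<and> \<bar>h_star x\<bar> \<le> 100 * \<bar>x - e\<bar>"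
proof -
  have "((\<lambda>x. - h_star x) has_real_derivative - poly (pderiv h_star_poly) x) (at x)" for x
    using h_star_deriv by (auto intro!: derivative_eq_intros)
  from zero_crossing_bounds[OF this h_star_deriv_bounds_high _ _ assms(1) assms(3)]
  show ?thesis using assms(2) by simp
qed

lemma h_star_zeros_in_unit_interval:
  assumes e1: "e1 \<in> {1/5..1/4}" "h_star e1 = 0" and e2: "e2 \<in> {4/5..17/20}" "h_star e2 = 0"
    and x: "x \<in> {0..1}" "h_star x = 0"
  shows "x = e1 \<or> x = e2"
proof -
  consider "x \<in> {0..3/20}" | "x \<in> {9/10..1}" | "x \<in> {3/10..3/4}" | "x \<in> {3/20..3/10}" | "x \<in> {3/4..9/10}"
    using x by force
  then show ?thesis
  proof cases
    case 4
    then have "10 * (x - e1)^2 \<le> 0" using h_star_transversal_low[of e1 x] e1 x by auto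
    then show ?thesis by simp
  next
    case 5
    then have "10 * (x - e2)^2 \<le> 0" using h_star_transversal_high[of e2 x] e2 x by auto
    then show ?thesis by simp
  qed (use x h_star_neg_near_0 h_star_neg_near_1 h_star_pos in fastforce)+
qed

definition slow_state :: "real \<Rightarrow> real \<times> real \<times> real" where
  "slow_state e = (T0_star e, T2_star e, e)"

definition dev_T0 :: "real \<times> real \<times> real \<Rightarrow> real" where
  "dev_T0 X = fst X - T0_star (snd (snd X))"

definition dev_T2 :: "real \<times> real \<times> real \<Rightarrow> real" where
  "dev_T2 X = fst (snd X) - T2_star (snd (snd X))"

definition dev_eta :: "real \<Rightarrow> real \<times> real \<times> real \<Rightarrow> real" where
  "dev_eta e X = snd (snd X) - e"

definition eta_speed :: "real \<times> real \<times> real \<Rightarrow> real" where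
  "eta_speed X = dev_T0 X + dev_T2 X * p2 (snd (snd X)) + h_star (snd (snd X))"

lemma eta_speed_eq: "eta_speed X = fst X + fst (snd X) * p2 (snd (snd X)) - Tc"
  by (simp add: eta_speed_def dev_T0_def dev_T2_def h_star_def algebra_simps)

lemma F_eq_deviations:
  "R \<noteq> 0 \<Longrightarrow> F R eps X = (- (1.9 / R) * dev_T0 X, - (4 / R) * dev_T2 X, eps * eta_speed X)"
  by (cases X) (simp add: F_def dev_T0_def dev_T2_def eta_speed_def h_star_def T0_star_def T2_star_def
      Bc_def Dc_def Tc_def field_simps)

lemma equilibrium_iff_slow_state:
  assumes "R \<noteq> 0" "eps \<noteq> 0"
  shows "equilibrium (F R eps) X \<longleftrightarrow> (\<exists>e. X = slow_state e \<and> h_star e = 0)"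
proof
  assume "equilibrium (F R eps) X"
  then have "dev_T0 X = 0" "dev_T2 X = 0" "eta_speed X = 0"
    using assms by (simp_all add: equilibrium_def F_eq_deviations zero_prod_def)
  then show "\<exists>e. X = slow_state e \<and> h_star e = 0"
    by (intro exI[of _ "snd (snd X)"]) (auto simp: slow_state_def dev_T0_def dev_T2_def eta_speed_def prod_eq_iff)
next
  assume "\<exists>e. X = slow_state e \<and> h_star e = 0"
  then show "equilibrium (F R eps) X"
    using assms
    by (auto simp: equilibrium_def F_eq_deviations slow_state_def dev_T0_def dev_T2_def eta_speed_def zero_prod_def)
qed

lemma equilibria_with_ice_line_in_unit_interval:
  assumes "R \<noteq> 0" "eps \<noteq> 0"
    and e1: "e1 \<in> {1/5..1/4}" "h_star e1 = 0" and e2: "e2 \<in> {4/5..17/20}" "h_star e2 = 0"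
  shows "{p. equilibrium (F R eps) p \<and> snd (snd p) \<in> {0..1}} = {slow_state e1, slow_state e2}"
proof (intro set_eqI iffI)
  fix X assume "X \<in> {p. equilibrium (F R eps) p \<and> snd (snd p) \<in> {0..1}}"
  then obtain e where X: "X = slow_state e" "h_star e = 0" "e \<in> {0..1}"
    by (auto simp: equilibrium_iff_slow_state[OF assms(1,2)] slow_state_def)
  then have "e = e1 \<or> e = e2" using h_star_zeros_in_unit_interval[OF e1 e2] by blast
  then show "X \<in> {slow_state e1, slow_state e2}" using X by auto
next
  fix X assume "X \<in> {slow_state e1, slow_state e2}"
  then show "X \<in> {p. equilibrium (F R eps) p \<and> snd (snd p) \<in> {0..1}}"
    using e1 e2 by (auto simp: equilibrium_iff_slow_state[OF assms(1,2)] slow_state_def)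
qed

lemma slow_state_lipschitz:
  assumes "a \<in> {0..1}" "b \<in> {0..1}"
  shows "dist (slow_state a) (slow_state b) \<le> 849 * \<bar>a - b\<bar>"
proof (rule power2_le_imp_le)
  have "\<bar>T0_star a - T0_star b\<bar>^2 \<le> (600 * \<bar>a - b\<bar>)^2" "\<bar>T2_star a - T2_star b\<bar>^2 \<le> (600 * \<bar>a - b\<bar>)^2"
    using T0_star_lipschitz[OF assms] T2_star_lipschitz[OF assms] by (metis abs_ge_zero power_mono)+
  then have "(dist (slow_state a) (slow_state b))^2 \<le> 360000 * (a - b)^2 + 360000 * (a - b)^2 + (a - b)^2"
    by (simp add: dist_triple_sq slow_state_def power_mult_distrib)
  also have "\<dots> \<le> (849 * \<bar>a - b\<bar>)^2" by (simp add: power_mult_distrib)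
  finally show "(dist (slow_state a) (slow_state b))^2 \<le> (849 * \<bar>a - b\<bar>)^2" .
qed simp

text \<open>\<open>quad_form 1 e\<close> is the Lyapunov function at a stable equilibrium \<open>slow_state e\<close>, and
  \<open>quad_form (-1) e\<close> the Chetaev function at an unstable one.\<close>
definition quad_form :: "real \<Rightarrow> real \<Rightarrow> real \<times> real \<times> real \<Rightarrow> real" where
  "quad_form \<sigma> e X = (dev_eta e X)^2 + \<sigma> * ((dev_T0 X)^2 + (dev_T2 X)^2)"

definition quad_form_rate :: "real \<Rightarrow> real \<Rightarrow> real \<Rightarrow> real \<Rightarrow> real \<times> real \<times> real \<Rightarrow> real" where
  "quad_form_rate \<sigma> R eps e X = 2 * (eps * dev_eta e X * eta_speed X
     - \<sigma> * ((1.9 / R) * (dev_T0 X)^2 + (4 / R) * (dev_T2 X)^2 + eps * eta_speed X *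
         (1029 / 19 * q0 (snd (snd X)) * dev_T0 X + 1029 / 8 * q2 (snd (snd X)) * dev_T2 X)))"

lemma component_derivatives:
  fixes X :: "real \<Rightarrow> real \<times> real \<times> real"
  assumes "(X has_vector_derivative D) net"
  shows "((\<lambda>s. fst (X s)) has_real_derivative fst D) net"
    and "((\<lambda>s. fst (snd (X s))) has_real_derivative fst (snd D)) net"
    and "((\<lambda>s. snd (snd (X s))) has_real_derivative snd (snd D)) net"
  using bounded_linear.has_vector_derivative[OF bounded_linear_fst assms]
    bounded_linear.has_vector_derivative[OF bounded_linear_fst
      bounded_linear.has_vector_derivative[OF bounded_linear_snd assms]]
    bounded_linear.has_vector_derivative[OF bounded_linear_snd
      bounded_linear.has_vector_derivative[OF bounded_linear_snd assms]]
  by (simp_all add: has_real_derivative_iff_has_vector_derivative)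

lemma quad_form_deriv:
  assumes R: "R \<noteq> 0" and X: "(X has_vector_derivative F R eps (X t)) (at t within I)"
  shows "((\<lambda>s. quad_form \<sigma> e (X s)) has_real_derivative quad_form_rate \<sigma> R eps e (X t)) (at t within I)"
proof -
  note D = component_derivatives[OF X, unfolded F_eq_deviations[OF R] prod.sel]
  note T0 = DERIV_chain2[OF T0_star_deriv D(3)] and T2 = DERIV_chain2[OF T2_star_deriv D(3)]
  show ?thesis
    unfolding quad_form_def dev_eta_def dev_T0_def dev_T2_def
    by (rule derivative_eq_intros D T0 T2 refl)+
      (use R in \<open>simp add: quad_form_rate_def dev_eta_def dev_T0_def dev_T2_def power2_eq_square field_simps\<close>)
qed

lemma dev_eta_le_dist: "\<bar>dev_eta e X\<bar> \<le> dist X (slow_state e)"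
proof -
  have "(dev_eta e X)^2 \<le> (dist X (slow_state e))^2"
    by (simp add: dist_triple_sq slow_state_def dev_eta_def)
  then show ?thesis by (simp add: abs_le_square_iff[symmetric])
qed

lemma dev_eta_le_quad_form: "\<bar>dev_eta e X\<bar>^2 \<le> quad_form 1 e X"
  by (simp add: quad_form_def)

lemma dev_eta_small_of_quad_form:
  assumes "quad_form 1 e X < (1/20)^2"
  shows "\<bar>dev_eta e X\<bar> \<le> 1/20"
proof -
  have "\<bar>dev_eta e X\<bar>^2 < (1/20)^2" using dev_eta_le_quad_form[of e X] assms by linarith
  then have "\<bar>dev_eta e X\<bar> < 1/20" by (rule power2_less_imp_less) simp
  then show ?thesis by simp
qed

text \<open>The constant \<open>1444804 = 1202^2\<close> absorbs the Lipschitz constant 600 of \<open>T0_star\<close> and \<open>T2_star\<close>.\<close>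
lemma dist_quad_form_equiv:
  assumes e: "e \<in> {1/20..19/20}" and z: "\<bar>dev_eta e X\<bar> \<le> 1/20"
  shows "(dist X (slow_state e))^2 \<le> 1444804 * quad_form 1 e X"
    and "quad_form 1 e X \<le> 1444804 * (dist X (slow_state e))^2"
proof -
  define x where "x = snd (snd X)"
  have x: "x \<in> {0..1}" and e01: "e \<in> {0..1}"
    using z e unfolding dev_eta_def x_def abs_le_iff by auto
  define a b where "a = T0_star x - T0_star e" and "b = T2_star x - T2_star e"
  have "\<bar>a\<bar> \<le> 600 * \<bar>dev_eta e X\<bar>" "\<bar>b\<bar> \<le> 600 * \<bar>dev_eta e X\<bar>"
    using T0_star_lipschitz[OF x e01] T2_star_lipschitz[OF x e01]
    by (simp_all add: a_def b_def dev_eta_def x_def)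
  then have "\<bar>a\<bar>^2 \<le> (600 * \<bar>dev_eta e X\<bar>)^2" "\<bar>b\<bar>^2 \<le> (600 * \<bar>dev_eta e X\<bar>)^2"
    by (metis abs_ge_zero power_mono)+
  then have ab: "a^2 \<le> 360000 * (dev_eta e X)^2" "b^2 \<le> 360000 * (dev_eta e X)^2"
    by (simp_all add: power_mult_distrib)
  have D: "(dist X (slow_state e))^2 = (dev_T0 X + a)^2 + (dev_T2 X + b)^2 + (dev_eta e X)^2"
    by (simp add: dist_triple_sq slow_state_def dev_T0_def dev_T2_def dev_eta_def a_def b_def x_def)
  have u: "(dev_T0 X)^2 \<le> 2 * (dev_T0 X + a)^2 + 2 * a^2"
    using sq_add_le[of "dev_T0 X + a" "- a"] by simp
  have v: "(dev_T2 X)^2 \<le> 2 * (dev_T2 X + b)^2 + 2 * b^2"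
    using sq_add_le[of "dev_T2 X + b" "- b"] by simp
  show "(dist X (slow_state e))^2 \<le> 1444804 * quad_form 1 e X"
    using D ab sq_add_le[of "dev_T0 X" a] sq_add_le[of "dev_T2 X" b]
      zero_le_power2[of "dev_T0 X"] zero_le_power2[of "dev_T2 X"] zero_le_power2[of "dev_eta e X"]
    unfolding quad_form_def distrib_left mult_1 by linarith
  show "quad_form 1 e X \<le> 1444804 * (dist X (slow_state e))^2"
    using D ab u v zero_le_power2[of "dev_eta e X"] zero_le_power2[of "dev_T0 X + a"]
      zero_le_power2[of "dev_T2 X + b"]
    unfolding quad_form_def mult_1 by linarith
qed

definition ice_box :: "real \<Rightarrow> (real \<times> real \<times> real) set" where
  "ice_box e = cbox (slow_state e - (1, 1, 1/20)) (slow_state e + (1, 1, 1/20))"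

lemma mem_ice_box:
  "X \<in> ice_box e \<longleftrightarrow> fst X \<in> {T0_star e - 1..T0_star e + 1} \<and>
     fst (snd X) \<in> {T2_star e - 1..T2_star e + 1} \<and> snd (snd X) \<in> {e - 1/20..e + 1/20}"
  by (cases X) (simp add: ice_box_def slow_state_def)

lemma ball_subset_ice_box:
  assumes "dist X (slow_state e) < 1/20"
  shows "X \<in> ice_box e"
  using components_le_norm[of "X - slow_state e"] assms
  by (auto simp: mem_ice_box slow_state_def dist_norm abs_le_iff)

section \<open>Stability analysis for small \<open>eps\<close>\<close>

text \<open>The bound on \<open>eps\<close> is crude: it only has to make the drift of the ice line negligible against
  the relaxation rates \<open>1.9/R\<close> and \<open>4/R\<close> of the temperatures.\<close>
locale weak_coupling =
  fixes R eps :: real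
  assumes R_pos: "0 < R" and eps_pos: "0 < eps" and eps_small: "eps < 1 / (10^9 * R)"
begin

text \<open>The smallness conditions of \<open>dissipation_estimate\<close> for \<open>S = 600\<close>, \<open>M = 100\<close>, \<open>c = 10\<close>.\<close>
lemma eps_bounds: "eps * ((1 + 600 * 100)^2 / (2 * 10) + 600) \<le> 1.9 / R / 4" "eps * 10 \<le> 1.9 / R"
proof -
  have "eps * R < 1 / 10^9" using eps_small R_pos by (simp add: field_simps)
  then show "eps * ((1 + 600 * 100)^2 / (2 * 10) + 600) \<le> 1.9 / R / 4" "eps * 10 \<le> 1.9 / R"
    using R_pos by (simp_all add: field_simps)
qed

lemma lyapunov_rate_le:
  assumes e: "e \<in> {4/5..17/20}" "h_star e = 0" and z: "\<bar>dev_eta e X\<bar> \<le> 1/20"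
  shows "quad_form_rate 1 R eps e X \<le> - (10 * eps) * quad_form 1 e X"
proof -
  define x where "x = snd (snd X)"
  have x: "x \<in> {3/4..9/10}" "x \<in> {0..1}" using e z unfolding dev_eta_def x_def abs_le_iff by auto
  have h: "10 * (dev_eta e X)^2 \<le> dev_eta e X * - h_star x" "\<bar>h_star x\<bar> \<le> 100 * \<bar>dev_eta e X\<bar>"
    using h_star_transversal_high[OF _ e(2) x(1)] e by (auto simp: dev_eta_def x_def)
  have "eps * dev_eta e X * eta_speed X - 1.9 / R * (dev_T0 X)^2 - 4 / R * (dev_T2 X)^2
      - eps * eta_speed X * (1029 / 19 * q0 x * dev_T0 X + 1029 / 8 * q2 x * dev_T2 X)
    \<le> - (eps * 10 / 2) * ((dev_eta e X)^2 + (dev_T0 X)^2 + (dev_T2 X)^2)"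
    unfolding eta_speed_def x_def[symmetric]
  proof (rule dissipation_estimate)
    show "dev_eta e X * h_star x \<le> - 10 * (dev_eta e X)^2" using h(1) by simp
    show "\<bar>1029 / 19 * q0 x\<bar> \<le> 600" "\<bar>1029 / 8 * q2 x\<bar> \<le> 600"
      using q0_bound[OF x(2)] q2_bound[OF x(2)] by (simp_all add: abs_mult)
  qed (use h(2) p2_bound[OF x(2)] eps_bounds eps_pos R_pos in auto)
  then show ?thesis by (simp add: quad_form_rate_def quad_form_def x_def algebra_simps)
qed

lemma chetaev_rate_ge:
  assumes e: "e \<in> {1/5..1/4}" "h_star e = 0" and z: "\<bar>dev_eta e X\<bar> \<le> 1/20"
  shows "10 * eps * quad_form (-1) e X \<le> quad_form_rate (-1) R eps e X"
proof -
  define x where "x = snd (snd X)"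
  have x: "x \<in> {3/20..3/10}" "x \<in> {0..1}" using e z unfolding dev_eta_def x_def abs_le_iff by auto
  have h: "10 * (dev_eta e X)^2 \<le> dev_eta e X * h_star x" "\<bar>h_star x\<bar> \<le> 100 * \<bar>dev_eta e X\<bar>"
    using h_star_transversal_low[OF _ e(2) x(1)] e by (auto simp: dev_eta_def x_def)
  define u v H where "u = - dev_T0 X" and "v = - dev_T2 X" and "H = - h_star x"
  define E where "E = eps * dev_eta e X * (u + v * p2 x + H) - 1.9 / R * u^2 - 4 / R * v^2
      - eps * (u + v * p2 x + H) * (1029 / 19 * q0 x * u + 1029 / 8 * q2 x * v)"
  have "E \<le> - (eps * 10 / 2) * ((dev_eta e X)^2 + u^2 + v^2)"
    unfolding E_def
  proof (rule dissipation_estimate)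
    show "dev_eta e X * H \<le> - 10 * (dev_eta e X)^2" using h(1) by (simp add: H_def)
    show "\<bar>1029 / 19 * q0 x\<bar> \<le> 600" "\<bar>1029 / 8 * q2 x\<bar> \<le> 600"
      using q0_bound[OF x(2)] q2_bound[OF x(2)] by (simp_all add: abs_mult)
  qed (use h(2) p2_bound[OF x(2)] eps_bounds eps_pos R_pos in \<open>auto simp: H_def\<close>)
  moreover have "quad_form_rate (-1) R eps e X = - 2 * E"
    using R_pos by (simp add: quad_form_rate_def eta_speed_def E_def u_def v_def H_def x_def field_simps)
  moreover have "10 * eps * quad_form (-1) e X \<le> 10 * eps * ((dev_eta e X)^2 + u^2 + v^2)"
    using eps_pos by (intro mult_left_mono) (auto simp: quad_form_def u_def v_def)
  ultimately show ?thesis by linarith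
qed

lemma quad_form_deriv_on_solution:
  assumes "is_solution_on (F R eps) X I" "s \<in> I"
  shows "((\<lambda>s. quad_form \<sigma> e (X s)) has_real_derivative quad_form_rate \<sigma> R eps e (X s)) (at s within I)"
  using quad_form_deriv[of R X eps s I] assms R_pos by (simp add: is_solution_on_def)

lemma lyapunov_decay:
  assumes e: "e \<in> {4/5..17/20}" "h_star e = 0"
    and sol: "is_solution_on (F R eps) X I" and sub: "{0..t} \<subseteq> I" and t: "0 \<le> t"
    and V0: "quad_form 1 e (X 0) < (1/20)^2"
  shows "quad_form 1 e (X t) \<le> quad_form 1 e (X 0) * exp (- (10 * eps) * t)"
proof -
  define g where "g s = quad_form 1 e (X s)" for s
  have deriv: "(g has_real_derivative quad_form_rate 1 R eps e (X s)) (at s within {0..t'})"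
    if "s \<in> {0..t'}" "t' \<le> t" for s t'
    unfolding g_def using that sub
    by (intro DERIV_subset[OF quad_form_deriv_on_solution[OF sol]]) auto
  have rate: "quad_form_rate 1 R eps e (X s) \<le> - (10 * eps) * g s" if "g s < (1/20)^2" for s
    unfolding g_def
    using lyapunov_rate_le[OF e dev_eta_small_of_quad_form] that by (simp add: g_def)
  have g_nonneg: "0 \<le> g 0" by (simp add: g_def quad_form_def)
  have inside: "g s < (1/20)^2" if s: "s \<in> {0..t}" for s
  proof (rule ccontr)
    assume "\<not> g s < (1/20)^2"
    moreover have "continuous_on {0..t} g" by (rule DERIV_continuous_on[OF deriv]) auto
    ultimately obtain s1 where s1: "0 < s1" "s1 \<le> t" "(1/20)^2 \<le> g s1"
      and below: "\<And>s. 0 \<le> s \<Longrightarrow> s < s1 \<Longrightarrow> g s < (1/20)^2"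
      using first_exit_time[of t g "(1/20)^2" s] V0 s by (auto simp: g_def)
    have "g s1 \<le> g 0 * exp (- (10 * eps) * s1)"
      by (rule exp_decay_of_deriv_le[OF _ deriv]) (use s1 below rate in auto)
    also have "\<dots> \<le> g 0" using g_nonneg s1 eps_pos by (intro mult_left_le) auto
    finally show False using s1 V0 by (simp add: g_def)
  qed
  have "g t \<le> g 0 * exp (- (10 * eps) * t)"
    by (rule exp_decay_of_deriv_le[OF t deriv]) (use inside rate in auto)
  then show ?thesis by (simp add: g_def)
qed

text \<open>On the ball of radius \<open>1/24040 = 1/(20 * 1202)\<close> the form \<open>quad_form 1 e\<close> stays below \<open>(1/20)^2\<close>.\<close>
lemma dist_decay:
  assumes e: "e \<in> {4/5..17/20}" "h_star e = 0"
    and sol: "is_solution_on (F R eps) X I" and sub: "{0..t} \<subseteq> I" and t: "0 \<le> t"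
    and d0: "dist (X 0) (slow_state e) < 1/24040"
  shows "dist (X t) (slow_state e) \<le> 1444804 * dist (X 0) (slow_state e) * exp (- (5 * eps) * t)"
proof -
  define d where "d s = dist (X s) (slow_state e)" for s
  have e': "e \<in> {1/20..19/20}" using e by auto
  have "\<bar>dev_eta e (X 0)\<bar> \<le> 1/20" using dev_eta_le_dist[of e "X 0"] d0 by simp
  then have V0: "quad_form 1 e (X 0) \<le> 1444804 * (d 0)^2"
    using dist_quad_form_equiv(2)[OF e'] by (simp add: d_def)
  have "1444804 * (d 0)^2 < 1444804 * (1/24040)^2"
    using d0 by (intro mult_strict_left_mono power_strict_mono) (auto simp: d_def)
  then have V0_small: "quad_form 1 e (X 0) < (1/20)^2"
    using V0 by (simp add: power2_eq_square)
  have Vt: "quad_form 1 e (X t) \<le> quad_form 1 e (X 0) * exp (- (10 * eps) * t)"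
    by (rule lyapunov_decay[OF e sol sub t V0_small])
  also have "\<dots> \<le> quad_form 1 e (X 0)" using eps_pos t by (intro mult_left_le) (auto simp: quad_form_def)
  finally have "\<bar>dev_eta e (X t)\<bar> \<le> 1/20"
    using V0_small dev_eta_small_of_quad_form by (meson le_less_trans)
  then have "(d t)^2 \<le> 1444804 * quad_form 1 e (X t)"
    using dist_quad_form_equiv(1)[OF e'] by (simp add: d_def)
  also have "\<dots> \<le> 1444804 * (1444804 * (d 0)^2 * exp (- (10 * eps) * t))"
    using Vt V0 by (intro mult_left_mono) (auto intro: order_trans mult_right_mono)
  also have "\<dots> = (1444804 * d 0 * exp (- (5 * eps) * t))^2"
    by (simp add: power2_eq_square exp_add[symmetric])
  finally have "d t \<le> 1444804 * d 0 * exp (- (5 * eps) * t)"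
    by (rule power2_le_imp_le) (simp add: d_def)
  then show ?thesis by (simp add: d_def)
qed

lemma asymp_stable_slow_state:
  assumes e: "e \<in> {4/5..17/20}" "h_star e = 0"
  shows "asymp_stable (F R eps) (slow_state e)"
  unfolding asymp_stable_def
proof
  show "lyap_stable (F R eps) (slow_state e)"
    unfolding lyap_stable_def
  proof (intro allI impI)
    fix r :: real assume r: "0 < r"
    show "\<exists>d>0. \<forall>x b. 0 < b \<longrightarrow> is_solution_on (F R eps) x {0..<b} \<longrightarrow> dist (x 0) (slow_state e) < d
        \<longrightarrow> (\<forall>t\<in>{0..<b}. dist (x t) (slow_state e) < r)"
    proof (intro exI[of _ "min (1/24040) (r / 1444804)"] conjI allI impI ballI)
      fix x b t assume sol: "is_solution_on (F R eps) x {0..<b}"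
        and d0: "dist (x 0) (slow_state e) < min (1/24040) (r / 1444804)" and t: "t \<in> {0..<b}"
      have "dist (x t) (slow_state e) \<le> 1444804 * dist (x 0) (slow_state e) * exp (- (5 * eps) * t)"
        by (rule dist_decay[OF e sol]) (use t d0 in auto)
      also have "\<dots> \<le> 1444804 * dist (x 0) (slow_state e)"
        using eps_pos t by (intro mult_left_le) auto
      also have "\<dots> < r" using d0 by (simp add: field_simps)
      finally show "dist (x t) (slow_state e) < r" .
    qed (use r in auto)
  qed
  show "\<exists>d>0. \<forall>x. is_solution_on (F R eps) x {0..} \<longrightarrow> dist (x 0) (slow_state e) < d
      \<longrightarrow> (x \<longlongrightarrow> slow_state e) at_top"
  proof (intro exI[of _ "1/24040"] conjI allI impI)
    fix x assume sol: "is_solution_on (F R eps) x {0..}" and d0: "dist (x 0) (slow_state e) < 1/24040"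
    have "filterlim (\<lambda>t. - (5 * eps) * t) at_bot at_top"
      by (rule filterlim_tendsto_neg_mult_at_bot[OF tendsto_const _ filterlim_ident]) (use eps_pos in simp)
    then have "((\<lambda>t. exp (- (5 * eps) * t)) \<longlongrightarrow> 0) at_top"
      by (rule filterlim_compose[OF exp_at_bot])
    then have lim: "((\<lambda>t. 1444804 * dist (x 0) (slow_state e) * exp (- (5 * eps) * t)) \<longlongrightarrow> 0) at_top"
      by (rule tendsto_mult_right_zero)
    have bound: "\<forall>\<^sub>F t in at_top.
        dist (x t) (slow_state e) \<le> 1444804 * dist (x 0) (slow_state e) * exp (- (5 * eps) * t)"
      using eventually_ge_at_top[of 0] by eventually_elim (rule dist_decay[OF e sol _ _ d0]; auto)
    have "((\<lambda>t. dist (x t) (slow_state e)) \<longlongrightarrow> 0) at_top"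
      by (rule tendsto_sandwich[OF _ bound tendsto_const lim]) simp
    then show "(x \<longlongrightarrow> slow_state e) at_top" by (rule tendsto_dist_iff[THEN iffD2])
  qed simp
qed

lemma F_lipschitz_on_ice_box:
  assumes e: "e \<in> {1/20..19/20}" and P: "P \<in> ice_box e" and Q: "Q \<in> ice_box e"
  shows "norm (F R eps P - F R eps Q) \<le> 2105 * (6 / R + eps) * norm (P - Q)"
proof -
  obtain a b c a' b' c' where PQ: "P = (a, b, c)" "Q = (a', b', c')" by (cases P; cases Q)
  define N where "N = norm (P - Q)"
  have d: "\<bar>a - a'\<bar> \<le> N" "\<bar>b - b'\<bar> \<le> N" "\<bar>c - c'\<bar> \<le> N"
    using components_le_norm[of "P - Q"] by (auto simp: PQ N_def)
  have c: "c \<in> {0..1}" "c' \<in> {0..1}" and b': "\<bar>b'\<bar> \<le> 701"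
    using P Q e T2_star_bound[of e] by (auto simp: PQ mem_ice_box abs_le_iff)
  have T0: "\<bar>(a - a') - (T0_star c - T0_star c')\<bar> \<le> 601 * N"
    using T0_star_lipschitz[OF c] d abs_triangle_ineq4[of "a - a'" "T0_star c - T0_star c'"] by (smt (verit))
  have T2: "\<bar>(b - b') - (T2_star c - T2_star c')\<bar> \<le> 601 * N"
    using T2_star_lipschitz[OF c] d abs_triangle_ineq4[of "b - b'" "T2_star c - T2_star c'"] by (smt (verit))
  have "\<bar>b - b'\<bar> * \<bar>p2 c\<bar> \<le> N * 1" "\<bar>b'\<bar> * \<bar>p2 c - p2 c'\<bar> \<le> 701 * (3 * N)"
    using d p2_bound[OF c(1)] p2_lipschitz[OF c] b' by (intro mult_mono; simp)+
  then have eta: "\<bar>(a - a') + (b - b') * p2 c + b' * (p2 c - p2 c')\<bar> \<le> 2105 * N"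
    using d abs_triangle_ineq[of "(a - a') + (b - b') * p2 c" "b' * (p2 c - p2 c')"]
      abs_triangle_ineq[of "a - a'" "(b - b') * p2 c"] by (simp add: abs_mult)
  have FPQ: "F R eps P - F R eps Q = (- (1.9 / R) * ((a - a') - (T0_star c - T0_star c')),
      - (4 / R) * ((b - b') - (T2_star c - T2_star c')),
      eps * ((a - a') + (b - b') * p2 c + b' * (p2 c - p2 c')))"
    using R_pos by (simp add: PQ F_eq_deviations eta_speed_eq dev_T0_def dev_T2_def algebra_simps)
      (simp add: field_simps)
  have scale: "\<bar>k * x\<bar> \<le> \<bar>k\<bar> * B" if "\<bar>x\<bar> \<le> B" for k x B :: real
    using that by (simp add: abs_mult mult_left_mono)
  have "\<bar>- (1.9 / R) * ((a - a') - (T0_star c - T0_star c'))\<bar> \<le> 1.9 / R * (601 * N)"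
    "\<bar>- (4 / R) * ((b - b') - (T2_star c - T2_star c'))\<bar> \<le> 4 / R * (601 * N)"
    "\<bar>eps * ((a - a') + (b - b') * p2 c + b' * (p2 c - p2 c'))\<bar> \<le> eps * (2105 * N)"
    using scale[OF T0, of "- (1.9 / R)"] scale[OF T2, of "- (4 / R)"] scale[OF eta, of eps] R_pos eps_pos
    by simp_all
  then have "norm (F R eps P - F R eps Q) \<le> 1.9 / R * (601 * N) + 4 / R * (601 * N) + eps * (2105 * N)"
    using norm_triple_le[of "F R eps P - F R eps Q"] unfolding FPQ by simp
  also have "\<dots> \<le> 2105 * (6 / R + eps) * N"
    using R_pos eps_pos by (simp add: N_def field_simps)
  finally show ?thesis by (simp add: N_def)
qed

lemma solution_near_slow_state_exists:
  assumes e: "e \<in> {1/20..19/20}" and T: "0 < T"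
  obtains X where "X 0 = X0" "continuous_on {0..T} X"
    "\<And>t. t \<in> {0..T} \<Longrightarrow> dist (X t) (slow_state e) < 1/20 \<Longrightarrow>
       (X has_vector_derivative F R eps (X t)) (at t within {0..T})"
proof -
  define lo hi where "lo = slow_state e - (1, 1, 1/20)" and "hi = slow_state e + (1, 1, 1/20)"
  have box: "ice_box e = cbox lo hi" by (simp add: ice_box_def lo_def hi_def)
  have "slow_state e \<in> cbox lo hi" using ball_subset_ice_box[of "slow_state e" e] box by simp
  then have "\<forall>i\<in>Basis. lo \<bullet> i \<le> hi \<bullet> i" using box_ne_empty(1) by blast
  then have clamp_in: "clamp lo hi Y \<in> ice_box e" for Y using box by simp
  text \<open>Truncating the state to \<open>ice_box e\<close> makes the vector field globally Lipschitz.\<close>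
  define G where "G Y = F R eps (clamp lo hi Y)" for Y
  have lip: "norm (G Y - G Z) \<le> 2105 * (6 / R + eps) * norm (Y - Z)" for Y Z
  proof -
    have "norm (G Y - G Z) \<le> 2105 * (6 / R + eps) * norm (clamp lo hi Y - clamp lo hi Z)"
      unfolding G_def by (rule F_lipschitz_on_ice_box[OF e clamp_in clamp_in])
    also have "\<dots> \<le> 2105 * (6 / R + eps) * norm (Y - Z)"
      using dist_clamps_le_dist_args[of lo hi Y Z] R_pos eps_pos
      by (intro mult_left_mono) (auto simp: dist_norm)
    finally show ?thesis .
  qed
  moreover have "0 < 2105 * (6 / R + eps)" using R_pos eps_pos by (simp add: add_pos_pos)
  ultimately obtain X where X0: "X 0 = X0"
    and deriv: "\<And>t. t \<in> {0..T} \<Longrightarrow> (X has_vector_derivative G (X t)) (at t within {0..T})"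
    using lipschitz_ode_solution_exists[OF _ _ T, of _ G X0] by blast
  show ?thesis
  proof (rule that[of X])
    show "X 0 = X0" by (rule X0)
    show "continuous_on {0..T} X"
      using deriv has_vector_derivative_continuous by (metis continuous_on_eq_continuous_within)
    fix t assume "t \<in> {0..T}" "dist (X t) (slow_state e) < 1/20"
    then show "(X has_vector_derivative F R eps (X t)) (at t within {0..T})"
      using deriv[of t] ball_subset_ice_box[of "X t" e] box by (simp add: G_def)
  qed
qed

lemma chetaev_growth:
  assumes e: "e \<in> {1/5..1/4}" "h_star e = 0" and T: "0 \<le> T"
    and deriv: "\<And>t. t \<in> {0..T} \<Longrightarrow> (X has_vector_derivative F R eps (X t)) (at t within {0..T})"
    and near: "\<And>t. t \<in> {0..T} \<Longrightarrow> dist (X t) (slow_state e) < 1/20"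
  shows "quad_form (-1) e (X 0) * exp (10 * eps * T) \<le> quad_form (-1) e (X T)"
proof (rule exp_growth_of_deriv_ge[OF T])
  show "((\<lambda>s. quad_form (-1) e (X s)) has_real_derivative quad_form_rate (-1) R eps e (X s))
      (at s within {0..T})" if "s \<in> {0..T}" for s
    using quad_form_deriv[OF _ deriv[OF that]] R_pos by simp
  show "10 * eps * quad_form (-1) e (X s) \<le> quad_form_rate (-1) R eps e (X s)" if "0 < s" "s < T" for s
  proof (rule chetaev_rate_ge[OF e])
    show "\<bar>dev_eta e (X s)\<bar> \<le> 1/20"
      using dev_eta_le_dist[of e "X s"] near[of s] that by simp
  qed
qed

lemma unstable_slow_state:
  assumes e: "e \<in> {1/5..1/4}" "h_star e = 0"
  shows "unstable (F R eps) (slow_state e)"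
  unfolding unstable_def
proof
  define p where "p = slow_state e"
  assume "lyap_stable (F R eps) (slow_state e)"
  then have "\<exists>d>0. \<forall>x b. 0 < b \<longrightarrow> is_solution_on (F R eps) x {0..<b} \<longrightarrow> dist (x 0) p < d
      \<longrightarrow> (\<forall>t\<in>{0..<b}. dist (x t) p < 1/40)"
    unfolding lyap_stable_def p_def by (rule allE[where x="1/40"]) simp
  then obtain d where d: "0 < d" and stable: "\<And>x b. 0 < b \<Longrightarrow> is_solution_on (F R eps) x {0..<b}
      \<Longrightarrow> dist (x 0) p < d \<Longrightarrow> \<forall>t\<in>{0..<b}. dist (x t) p < 1/40"
    by blast
  text \<open>Start on the slow manifold slightly to the right of \<open>e\<close>, where \<open>quad_form (-1) e\<close> is positive.\<close>
  define z0 where "z0 = min d (1/40) / 1000"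
  have z0: "0 < z0" "z0 \<le> 1/40000" using d by (auto simp: z0_def)
  define X0 where "X0 = slow_state (e + z0)"
  have "dist X0 p \<le> 849 * z0"
    using slow_state_lipschitz[of "e + z0" e] e z0 by (simp add: X0_def p_def)
  then have X0_near: "dist X0 p < d" "dist X0 p < 1/20" using d z0 by (auto simp: z0_def)
  have W0: "quad_form (-1) e X0 = z0^2"
    by (simp add: quad_form_def X0_def slow_state_def dev_T0_def dev_T2_def dev_eta_def)
  define T where "T = (ln ((1/20)^2 / z0^2) + 1) / (10 * eps)"
  have "z0^2 < (1/20)^2" using z0 by (intro power_strict_mono) auto
  then have "0 < ln ((1/20)^2 / z0^2)" using z0 by (intro ln_gt_zero) (simp add: field_simps)
  then have T: "0 < T" using eps_pos by (simp add: T_def)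
  have W_big: "(1/20)^2 < z0^2 * exp (10 * eps * T)"
  proof -
    have "z0^2 * exp (10 * eps * T) = (1/20)^2 * exp 1"
      using z0 eps_pos by (simp add: T_def exp_add)
    then show ?thesis by simp
  qed
  obtain X where X0: "X 0 = X0" and cont: "continuous_on {0..T} X"
    and deriv: "\<And>t. t \<in> {0..T} \<Longrightarrow> dist (X t) p < 1/20 \<Longrightarrow>
       (X has_vector_derivative F R eps (X t)) (at t within {0..T})"
    using solution_near_slow_state_exists[of e T X0] e T unfolding p_def by auto
  have near: "dist (X t) p < 1/20" if "t \<in> {0..T}" for t
    by (rule stable_local_solution_stays_near[OF stable _ cont _ _ deriv that]) (use X0 X0_near in auto)
  have "quad_form (-1) e (X 0) * exp (10 * eps * T) \<le> quad_form (-1) e (X T)"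
    by (rule chetaev_growth[OF e less_imp_le[OF T]]) (use deriv near in \<open>auto simp: p_def\<close>)
  then have "z0^2 * exp (10 * eps * T) \<le> quad_form (-1) e (X T)" using W0 X0 by simp
  also have "\<dots> \<le> \<bar>dev_eta e (X T)\<bar>^2" by (simp add: quad_form_def)
  also have "\<dots> < (1/20)^2"
    using dev_eta_le_dist[of e "X T"] near[of T] T unfolding p_def by (intro power_strict_mono) auto
  finally show False using W_big by simp
qed

end

theorem proposition1:
  fixes R :: real
  assumes "R > 0"
  shows "\<exists>eps0>0. \<forall>eps. 0 < eps \<and> eps < eps0 \<longrightarrow>
           (\<exists>p1 p2. {p. equilibrium (F R eps) p \<and> snd (snd p) \<in> {0..1}} = {p1, p2}
              \<and> snd (snd p1) < snd (snd p2)
              \<and> unstable (F R eps) p1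
              \<and> asymp_stable (F R eps) p2)"
proof (intro exI[of _ "1 / (10^9 * R)"] conjI allI impI)
  show "0 < 1 / (10^9 * R)" using assms by simp
  fix eps :: real assume "0 < eps \<and> eps < 1 / (10^9 * R)"
  then interpret weak_coupling R eps using assms by unfold_locales auto
  obtain e1 where e1: "e1 \<in> {1/5..1/4}" "h_star e1 = 0" using h_star_zero_low by blast
  obtain e2 where e2: "e2 \<in> {4/5..17/20}" "h_star e2 = 0" using h_star_zero_high by blast
  show "\<exists>p1 p2. {p. equilibrium (F R eps) p \<and> snd (snd p) \<in> {0..1}} = {p1, p2}
      \<and> snd (snd p1) < snd (snd p2) \<and> unstable (F R eps) p1 \<and> asymp_stable (F R eps) p2"
  proof (intro exI conjI)
    show "{p. equilibrium (F R eps) p \<and> snd (snd p) \<in> {0..1}} = {slow_state e1, slow_state e2}"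
      using equilibria_with_ice_line_in_unit_interval[OF _ _ e1 e2] R_pos eps_pos by simp
    show "snd (snd (slow_state e1)) < snd (snd (slow_state e2))" using e1 e2 by (simp add: slow_state_def)
    show "unstable (F R eps) (slow_state e1)" by (rule unstable_slow_state[OF e1])
    show "asymp_stable (F R eps) (slow_state e2)" by (rule asymp_stable_slow_state[OF e2])
  qed
qed

end
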